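(* For any graph $\Gamma$, the polygraph monoid $P(\Gamma)=IH^0(M(\Gamma))$ is strongly $E^*$-unitary.
   Context: A graph $\Gamma=(V,E)$ has vertex set $V$ and irreflexive symmetric edge relation $E$. The graph monoid $M(\Gamma)$ is presented by $\langle x_v\ (v\in V)\mid x_ux_v=x_vx_u \text{ for } (u,v)\in E\rangle$. For a right cancellative monoid $D$ and $a\in D$, $\rho_a:D\to D$, $x\mapsto xa$, is a partial bijection of $D$; $IH(D)$ is the inverse submonoid of the symmetric inverse monoid on $D$ generated by all $\rho_a$, and $IH^0(D)=IH(D)\cup\{\emptyset\}$ with the empty map as zero. An inverse monoid $S$ with zero is strongly $E^*$-unitary if there is a group $G$ and a function $\theta:S\to G^0$ ($G$ with a zero adjoined) such that $a\theta=0$ iff $a=0$, $a\theta=1$ iff $a$ is a nonzero idempotent, and $(ab)\theta=(a\theta)(b\theta)$ whenever $ab\neq 0$. *)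

theory Defs
  imports "HOL-Algebra.Group"
begin

definition is_graph :: "'v set \<Rightarrow> ('v \<Rightarrow> 'v \<Rightarrow> bool) \<Rightarrow> bool" where
  "is_graph V E \<longleftrightarrow> (\<forall>u v. E u v \<longrightarrow> u \<in> V \<and> v \<in> V) \<and>
                     (\<forall>u v. E u v \<longrightarrow> E v u) \<and> (\<forall>v. \<not> E v v)"

definition swap_step :: "('v \<Rightarrow> 'v \<Rightarrow> bool) \<Rightarrow> ('v list \<times> 'v list) set" where
  "swap_step E = {(p @ [a, b] @ q, p @ [b, a] @ q) | p a b q. E a b}"

definition trace_eq :: "('v \<Rightarrow> 'v \<Rightarrow> bool) \<Rightarrow> ('v list \<times> 'v list) set" where
  "trace_eq E = (swap_step E \<union> (swap_step E)\<inverse>)\<^sup>*"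

definition word_class :: "('v \<Rightarrow> 'v \<Rightarrow> bool) \<Rightarrow> 'v list \<Rightarrow> 'v list set" where
  "word_class E w = {w'. (w, w') \<in> trace_eq E}"

definition graph_monoid :: "'v set \<Rightarrow> ('v \<Rightarrow> 'v \<Rightarrow> bool) \<Rightarrow> 'v list set set" where
  "graph_monoid V E = {word_class E w | w. set w \<subseteq> V}"

definition gm_mult :: "('v \<Rightarrow> 'v \<Rightarrow> bool) \<Rightarrow> 'v list set \<Rightarrow> 'v list set \<Rightarrow> 'v list set" where
  "gm_mult E X Y = (\<Union>{word_class E (u @ w) | u w. u \<in> X \<and> w \<in> Y})"

text \<open>Partial bijections are represented as relations (sets of pairs); maps act on the
  right, so the product s t (first s, then t) is relational composition s O t, and the
  inverse is the converse relation.\<close>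

definition rho :: "'v set \<Rightarrow> ('v \<Rightarrow> 'v \<Rightarrow> bool) \<Rightarrow> 'v list set
                   \<Rightarrow> ('v list set \<times> 'v list set) set" where
  "rho V E a = {(x, gm_mult E x a) | x. x \<in> graph_monoid V E}"

inductive_set IH :: "'v set \<Rightarrow> ('v \<Rightarrow> 'v \<Rightarrow> bool) \<Rightarrow> ('v list set \<times> 'v list set) set set"
  for V E where
  gen: "a \<in> graph_monoid V E \<Longrightarrow> rho V E a \<in> IH V E"
| ident: "Id_on (graph_monoid V E) \<in> IH V E"
| comp: "s \<in> IH V E \<Longrightarrow> t \<in> IH V E \<Longrightarrow> s O t \<in> IH V E"
| inv: "s \<in> IH V E \<Longrightarrow> s\<inverse> \<in> IH V E"

definition polygraph_monoid ::
  "'v set \<Rightarrow> ('v \<Rightarrow> 'v \<Rightarrow> bool) \<Rightarrow> ('v list set \<times> 'v list set) set set" where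
  "polygraph_monoid V E = IH V E \<union> {{}}"

text \<open>G^0 is rendered as 'g option with None the adjoined zero.\<close>
definition strong_E_unitary_witness ::
  "'s set \<Rightarrow> ('s \<Rightarrow> 's \<Rightarrow> 's) \<Rightarrow> 's \<Rightarrow> ('g, 'm) monoid_scheme \<Rightarrow> ('s \<Rightarrow> 'g option) \<Rightarrow> bool"
  where
  "strong_E_unitary_witness S prd z G \<theta> \<longleftrightarrow>
     group G \<and>
     (\<forall>a\<in>S. \<forall>g. \<theta> a = Some g \<longrightarrow> g \<in> carrier G) \<and>
     (\<forall>a\<in>S. \<theta> a = None \<longleftrightarrow> a = z) \<and>
     (\<forall>a\<in>S. \<theta> a = Some \<one>\<^bsub>G\<^esub> \<longleftrightarrow> a \<noteq> z \<and> prd a a = a) \<and>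
     (\<forall>a\<in>S. \<forall>b\<in>S. prd a b \<noteq> z \<longrightarrow>
        \<theta> (prd a b) = Some (the (\<theta> a) \<otimes>\<^bsub>G\<^esub> the (\<theta> b)))"

text \<open>The group is existentially quantified; its elements are taken of type 's list,
  which is large enough (cardinality at least max(|S|, aleph_0)) to contain an
  isomorphic copy of the subgroup generated by the image of any such theta.\<close>
definition strongly_E_star_unitary :: "'s set \<Rightarrow> ('s \<Rightarrow> 's \<Rightarrow> 's) \<Rightarrow> 's \<Rightarrow> bool" where
  "strongly_E_star_unitary S prd z \<longleftrightarrow>
     (\<exists>(G :: 's list monoid) \<theta>. strong_E_unitary_witness S prd z G \<theta>)"

end

theory Submission
  imports Defs "HOL-Algebra.Bij" "HOL-Library.Countable"
begin

text \<open>Let each vertex c act on ('v \<times> 'v) \<times> \<rat> by appending a base-3 digit on the line of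
  every dependent pair containing c.  Commuting vertices act on disjoint lines, so this is an
  action of M(\<Gamma>) by permutations X \<mapsto> \<psi>(X), and it is faithful because a trace is determined
  by its projections onto pairs of dependent letters.  As \<psi> turns right multiplication into
  composition, every nonzero s in IH(M(\<Gamma>)) satisfies \<psi>(Y) = \<psi>(X) \<circ> h for all (X, Y) \<in> s and a
  unique permutation h.  The map s \<mapsto> h is multiplicative on nonzero products, and h = id
  forces s \<subseteq> Id by faithfulness; so it witnesses strong E*-unitarity.\<close>

lemma swap_step_in_context:
  assumes "(x, y) \<in> swap_step E"
  shows "(l @ x @ r, l @ y @ r) \<in> swap_step E"
proof -
  obtain p a b q where "x = p @ [a, b] @ q" "y = p @ [b, a] @ q" "E a b"
    using assms unfolding swap_step_def by blast
  then have "l @ x @ r = (l @ p) @ [a, b] @ (q @ r) \<and> l @ y @ r = (l @ p) @ [b, a] @ (q @ r) \<and> E a b"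
    by simp
  then show ?thesis unfolding swap_step_def by blast
qed

lemma trace_eq_in_context:
  assumes "(x, y) \<in> trace_eq E"
  shows "(l @ x @ r, l @ y @ r) \<in> trace_eq E"
  using assms unfolding trace_eq_def
proof (induction rule: rtrancl_induct)
  case (step y z)
  then have "(l @ y @ r, l @ z @ r) \<in> swap_step E \<union> (swap_step E)\<inverse>"
    using swap_step_in_context by blast
  with step.IH show ?case by (rule rtrancl_into_rtrancl)
qed simp

lemma trace_eq_refl [simp]: "(x, x) \<in> trace_eq E"
  unfolding trace_eq_def by simp

lemma trace_eq_sym: "(x, y) \<in> trace_eq E \<Longrightarrow> (y, x) \<in> trace_eq E"
  using symD[OF sym_rtrancl[OF sym_Un_converse]] unfolding trace_eq_def .

lemma trace_eq_trans: "(x, y) \<in> trace_eq E \<Longrightarrow> (y, z) \<in> trace_eq E \<Longrightarrow> (x, z) \<in> trace_eq E"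
  unfolding trace_eq_def by simp

lemma trace_eq_append:
  assumes "(u, u') \<in> trace_eq E" and "(w, w') \<in> trace_eq E"
  shows "(u @ w, u' @ w') \<in> trace_eq E"
proof -
  have "(u @ w, u' @ w) \<in> trace_eq E"
    using trace_eq_in_context[OF assms(1), of "[]" w] by simp
  moreover have "(u' @ w, u' @ w') \<in> trace_eq E"
    using trace_eq_in_context[OF assms(2), of u' "[]"] by simp
  ultimately show ?thesis by (rule trace_eq_trans)
qed

lemma word_class_eq_iff: "word_class E u = word_class E v \<longleftrightarrow> (u, v) \<in> trace_eq E"
proof
  assume "word_class E u = word_class E v"
  then show "(u, v) \<in> trace_eq E" unfolding word_class_def by auto
next
  assume uv: "(u, v) \<in> trace_eq E"
  have "(u, w) \<in> trace_eq E \<longleftrightarrow> (v, w) \<in> trace_eq E" for w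
    using trace_eq_trans[OF uv] trace_eq_trans[OF trace_eq_sym[OF uv]] by blast
  then show "word_class E u = word_class E v" unfolding word_class_def by blast
qed

lemma mem_word_class_self [simp]: "u \<in> word_class E u"
  unfolding word_class_def by simp

lemma gm_mult_word_class: "gm_mult E (word_class E u) (word_class E w) = word_class E (u @ w)"
proof -
  have "word_class E (u' @ w') = word_class E (u @ w)"
    if "u' \<in> word_class E u" and "w' \<in> word_class E w" for u' w'
  proof -
    have "(u @ w, u' @ w') \<in> trace_eq E"
      using that by (simp add: word_class_def trace_eq_append)
    then show ?thesis by (simp add: word_class_eq_iff trace_eq_sym)
  qed
  then have "{word_class E (u' @ w') |u' w'. u' \<in> word_class E u \<and> w' \<in> word_class E w}
      = {word_class E (u @ w)}"
    using mem_word_class_self by blast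
  then show ?thesis
    unfolding gm_mult_def by simp
qed

lemma gm_mult_closed:
  assumes "X \<in> graph_monoid V E" and "Y \<in> graph_monoid V E"
  shows "gm_mult E X Y \<in> graph_monoid V E"
proof -
  obtain u w where "X = word_class E u" "Y = word_class E w" "set u \<subseteq> V" "set w \<subseteq> V"
    using assms unfolding graph_monoid_def by blast
  then show ?thesis
    unfolding graph_monoid_def by (auto simp: gm_mult_word_class intro!: exI[of _ "u @ w"])
qed

lemma inj_comp_left_cancel: "inj f \<Longrightarrow> f \<circ> g = f \<circ> h \<Longrightarrow> g = h"
  by (simp add: fun_eq_iff inj_eq)

lemma IH_subset_graph_monoid:
  assumes "s \<in> IH V E"
  shows "s \<subseteq> graph_monoid V E \<times> graph_monoid V E"
  using assms by induction (auto simp: rho_def gm_mult_closed Id_on_def)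

fun base3_code :: "'v \<Rightarrow> 'v list \<Rightarrow> nat" where
  "base3_code a [] = 0"
| "base3_code a (c # w) = 3 * base3_code a w + (if c = a then 1 else 2)"

lemma base3_code_inj:
  assumes "set u \<subseteq> {a, b}" and "set v \<subseteq> {a, b}" and "base3_code a u = base3_code a v"
  shows "u = v"
  using assms
proof (induction u arbitrary: v)
  case Nil
  then show ?case by (cases v) (auto split: if_splits)
next
  case (Cons c u)
  obtain d v' where v: "v = d # v'"
    using Cons.prems(3) by (cases v) (auto split: if_splits)
  have "base3_code a (c # u) mod 3 = base3_code a v mod 3"
    using Cons.prems(3) by simp
  then have digit: "(if c = a then 1 else 2 :: nat) = (if d = a then 1 else 2)"
    unfolding v by simp
  then have "c = d"
    using Cons.prems(1,2) unfolding v by (auto split: if_splits)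
  moreover have "base3_code a u = base3_code a v'"
    using Cons.prems(3) digit unfolding v by simp
  ultimately show ?case using Cons.IH[of v'] Cons.prems unfolding v by simp
qed

type_synonym 'v point = "('v \<times> 'v) \<times> rat"

locale independence =
  fixes E :: "'v \<Rightarrow> 'v \<Rightarrow> bool"
  assumes indep_sym: "E a b \<Longrightarrow> E b a"
    and indep_irrefl: "\<not> E a a"
begin

abbreviation proj :: "'v \<Rightarrow> 'v \<Rightarrow> 'v list \<Rightarrow> 'v list" where
  "proj a b \<equiv> filter (\<lambda>c. c = a \<or> c = b)"

lemma proj_swap_step:
  assumes "\<not> E a b" and "(x, y) \<in> swap_step E"
  shows "proj a b x = proj a b y"
proof -
  obtain l c d r where xy: "x = l @ [c, d] @ r" "y = l @ [d, c] @ r" and "E c d"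
    using assms(2) unfolding swap_step_def by blast
  then have "\<not> ((c = a \<or> c = b) \<and> (d = a \<or> d = b))"
    using assms(1) indep_sym indep_irrefl by blast
  then show ?thesis unfolding xy by auto
qed

lemma proj_trace_eq:
  assumes "\<not> E a b" and "(x, y) \<in> trace_eq E"
  shows "proj a b x = proj a b y"
  using assms(2) unfolding trace_eq_def
proof (induction rule: rtrancl_induct)
  case (step y z)
  then show ?case using proj_swap_step[OF assms(1)] by auto
qed simp

lemma trace_eq_move_to_front:
  assumes "\<forall>d\<in>set v1. E c d"
  shows "(v1 @ c # v2, c # v1 @ v2) \<in> trace_eq E"
  using assms
proof (induction v1)
  case (Cons d v1)
  have "(d # v1 @ c # v2, d # c # v1 @ v2) \<in> trace_eq E"
    using trace_eq_in_context[OF Cons.IH, of "[d]" "[]"] Cons.prems by simp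
  moreover have "(d # c # v1 @ v2, c # d # v1 @ v2) \<in> trace_eq E"
  proof -
    have "E d c" using Cons.prems indep_sym by simp
    then have "([] @ [d, c] @ (v1 @ v2), [] @ [c, d] @ (v1 @ v2)) \<in> swap_step E"
      unfolding swap_step_def by blast
    then show ?thesis unfolding trace_eq_def by (simp add: r_into_rtrancl)
  qed
  ultimately show ?case using trace_eq_trans by simp
qed simp

lemma split_at_first_occurrence:
  assumes "\<forall>a b. \<not> E a b \<longrightarrow> proj a b (c # u) = proj a b v"
  obtains v1 v2 where "v = v1 @ c # v2" and "\<forall>d\<in>set v1. E c d"
proof -
  have "c \<in> set (proj c c (c # u))" by simp
  also have "proj c c (c # u) = proj c c v" using assms indep_irrefl by blast
  finally have "c \<in> set v" by simp
  then obtain v1 v2 where v: "v = v1 @ c # v2" and "c \<notin> set v1"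
    by (meson split_list_first)
  moreover have "E c d" if "d \<in> set v1" for d
  proof (rule ccontr)
    assume "\<not> E c d"
    then have "c # proj c d u = proj c d v1 @ c # proj c d v2"
      using assms[rule_format, of c d] v by simp
    moreover obtain d' r where d': "proj c d v1 = d' # r"
      using \<open>d \<in> set v1\<close> by (cases "proj c d v1") (auto simp: filter_empty_conv)
    moreover have "d' \<in> set v1"
      using arg_cong[OF d', of set] by auto
    ultimately show False
      using \<open>c \<notin> set v1\<close> by simp
  qed
  ultimately show thesis using that by blast
qed

lemma trace_eq_if_proj_eq:
  assumes "\<forall>a b. \<not> E a b \<longrightarrow> proj a b u = proj a b v"
  shows "(u, v) \<in> trace_eq E"
  using assms
proof (induction u arbitrary: v)
  case Nil
  have "v = []"
  proof (cases v)
    case (Cons c v')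
    then have "proj c c [] = proj c c v" using Nil indep_irrefl by blast
    with Cons show ?thesis by simp
  qed
  then show ?case by simp
next
  case (Cons c u)
  obtain v1 v2 where v: "v = v1 @ c # v2" and indep: "\<forall>d\<in>set v1. E c d"
    using split_at_first_occurrence[OF Cons.prems] .
  have front: "(v, c # v1 @ v2) \<in> trace_eq E"
    using trace_eq_move_to_front[OF indep] v by simp
  have "proj a b u = proj a b (v1 @ v2)" if "\<not> E a b" for a b
  proof -
    have "proj a b (c # u) = proj a b (c # v1 @ v2)"
      using Cons.prems proj_trace_eq[OF that front] that by simp
    then show ?thesis by (auto split: if_splits)
  qed
  then have "(u, v1 @ v2) \<in> trace_eq E" using Cons.IH by blast
  then have "(c # u, c # v1 @ v2) \<in> trace_eq E"
    using trace_eq_in_context[of u "v1 @ v2" E "[c]" "[]"] by simp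
  then show ?case using trace_eq_sym[OF front] by (rule trace_eq_trans)
qed

text \<open>Working over \<rat> makes x \<mapsto> 3x + 1 and x \<mapsto> 3x + 2 bijective, and the value reached
  from ((a, b), 0) is the base-3 code of the projection onto {a, b}.\<close>
definition letter_perm :: "'v \<Rightarrow> 'v point \<Rightarrow> 'v point" where
  "letter_perm c = (\<lambda>((a, b), x). ((a, b),
     if \<not> E a b \<and> c = a then 3 * x + 1 else if \<not> E a b \<and> c = b then 3 * x + 2 else x))"

lemma bij_letter_perm: "bij (letter_perm c)"
proof (rule o_bij)
  let ?inv = "\<lambda>((a, b), x). ((a, b),
     if \<not> E a b \<and> c = a then (x - 1) / 3 else if \<not> E a b \<and> c = b then (x - 2) / 3 else x)"
  show "?inv \<circ> letter_perm c = id" and "letter_perm c \<circ> ?inv = id"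
    by (auto simp: letter_perm_def fun_eq_iff field_simps)
qed

lemma letter_perm_commute:
  assumes "E c d"
  shows "letter_perm c \<circ> letter_perm d = letter_perm d \<circ> letter_perm c"
proof
  fix z :: "'v point"
  obtain a b x where z: "z = ((a, b), x)" by (metis prod.exhaust)
  have "c \<noteq> d" using assms indep_irrefl by blast
  moreover have "\<not> (\<not> E a b \<and> (c = a \<or> c = b) \<and> (d = a \<or> d = b))"
    using \<open>c \<noteq> d\<close> assms indep_sym by blast
  ultimately show "(letter_perm c \<circ> letter_perm d) z = (letter_perm d \<circ> letter_perm c) z"
    unfolding z by (auto simp: letter_perm_def)
qed

definition word_perm :: "'v list \<Rightarrow> 'v point \<Rightarrow> 'v point" where
  "word_perm w = foldr (\<circ>) (map letter_perm w) id"

lemma word_perm_Nil [simp]: "word_perm [] = id"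
  and word_perm_Cons [simp]: "word_perm (c # w) = letter_perm c \<circ> word_perm w"
  by (simp_all add: word_perm_def)

lemma word_perm_append: "word_perm (u @ w) = word_perm u \<circ> word_perm w"
  by (induction u) (simp_all add: comp_assoc)

lemma bij_word_perm: "bij (word_perm w)"
proof (induction w)
  case (Cons c w)
  then show ?case unfolding word_perm_Cons by (rule bij_comp[OF _ bij_letter_perm])
qed (simp only: word_perm_Nil bij_id)

lemma word_perm_trace_eq:
  assumes "(u, v) \<in> trace_eq E"
  shows "word_perm u = word_perm v"
proof -
  have "word_perm x = word_perm y" if xy: "(x, y) \<in> swap_step E" for x y
  proof -
    obtain l c d r where "x = l @ [c, d] @ r" "y = l @ [d, c] @ r" and "E c d"
      using xy unfolding swap_step_def by blast
    moreover have "letter_perm c \<circ> (letter_perm d \<circ> word_perm r) = letter_perm d \<circ> (letter_perm c \<circ> word_perm r)"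
      using letter_perm_commute[OF \<open>E c d\<close>] by (simp flip: comp_assoc)
    ultimately show ?thesis by (simp add: word_perm_append)
  qed
  with assms show ?thesis
    unfolding trace_eq_def by (induction rule: rtrancl_induct) auto
qed

lemma word_perm_at_zero:
  assumes "\<not> E a b"
  shows "word_perm w ((a, b), 0) = ((a, b), of_nat (base3_code a (proj a b w)))"
  using assms by (induction w) (auto simp: letter_perm_def)

lemma word_perm_eq_iff: "word_perm u = word_perm v \<longleftrightarrow> (u, v) \<in> trace_eq E"
proof
  assume eq: "word_perm u = word_perm v"
  have "proj a b u = proj a b v" if "\<not> E a b" for a b
  proof (rule base3_code_inj)
    show "base3_code a (proj a b u) = base3_code a (proj a b v)"
      using word_perm_at_zero[OF that, of u] word_perm_at_zero[OF that, of v] eq by simp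
  qed auto
  then show "(u, v) \<in> trace_eq E" by (simp add: trace_eq_if_proj_eq)
qed (rule word_perm_trace_eq)

definition elem_perm :: "'v list set \<Rightarrow> 'v point \<Rightarrow> 'v point" where
  "elem_perm X = word_perm (SOME w. X = word_class E w)"

lemma elem_perm_word_class [simp]: "elem_perm (word_class E w) = word_perm w"
proof -
  have "word_class E w = word_class E (SOME w'. word_class E w = word_class E w')"
    by (rule someI) (rule refl)
  then show ?thesis
    unfolding elem_perm_def word_class_eq_iff by (simp add: word_perm_trace_eq)
qed

lemma bij_elem_perm: "bij (elem_perm X)"
  by (simp add: elem_perm_def bij_word_perm)

lemma elem_perm_inj:
  assumes "X \<in> graph_monoid V E" and "Y \<in> graph_monoid V E" and "elem_perm X = elem_perm Y"
  shows "X = Y"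
proof -
  obtain u w where "X = word_class E u" and "Y = word_class E w"
    using assms(1,2) unfolding graph_monoid_def by blast
  with assms(3) show ?thesis by (simp add: word_perm_eq_iff word_class_eq_iff)
qed

definition realizes :: "('v list set \<times> 'v list set) set \<Rightarrow> ('v point \<Rightarrow> 'v point) \<Rightarrow> bool" where
  "realizes s h \<longleftrightarrow> (\<forall>X Y. (X, Y) \<in> s \<longrightarrow> elem_perm Y = elem_perm X \<circ> h)"

lemma realizes_rho:
  assumes "a \<in> graph_monoid V E"
  shows "realizes (rho V E a) (elem_perm a)"
  unfolding realizes_def rho_def
proof clarify
  fix X assume "X \<in> graph_monoid V E"
  moreover obtain w where "a = word_class E w"
    using assms unfolding graph_monoid_def by blast
  ultimately show "elem_perm (gm_mult E X a) = elem_perm X \<circ> elem_perm a"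
    unfolding graph_monoid_def by (auto simp: gm_mult_word_class word_perm_append)
qed

lemma realizes_Id_on: "realizes (Id_on A) id"
  by (auto simp: realizes_def)

lemma realizes_relcomp: "realizes s h \<Longrightarrow> realizes t k \<Longrightarrow> realizes (s O t) (h \<circ> k)"
  unfolding realizes_def by (auto simp: comp_assoc)

lemma realizes_converse:
  assumes "bij h" and "realizes s h"
  shows "realizes (s\<inverse>) (Hilbert_Choice.inv h)"
  unfolding realizes_def
proof clarify
  fix X Y assume "(Y, X) \<in> s"
  then have "elem_perm X \<circ> Hilbert_Choice.inv h = elem_perm Y \<circ> (h \<circ> Hilbert_Choice.inv h)"
    using assms(2) by (auto simp: realizes_def comp_assoc)
  also have "h \<circ> Hilbert_Choice.inv h = id"
    using assms(1) by (simp add: bij_is_surj surj_iff[symmetric])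
  finally show "elem_perm Y = elem_perm X \<circ> Hilbert_Choice.inv h" by (metis comp_id)
qed

lemma realizes_unique:
  assumes "s \<noteq> {}" and "realizes s h" and "realizes s k"
  shows "h = k"
proof -
  obtain X Y where "(X, Y) \<in> s" using assms(1) by auto
  then have "elem_perm X \<circ> h = elem_perm X \<circ> k"
    using assms(2,3) by (auto simp: realizes_def)
  then show ?thesis by (rule inj_comp_left_cancel[OF bij_is_inj[OF bij_elem_perm]])
qed

lemma IH_realizable:
  assumes "s \<in> IH V E"
  shows "\<exists>h. bij h \<and> realizes s h"
  using assms
proof induction
  case (gen a)
  then show ?case using realizes_rho bij_elem_perm by blast
next
  case ident
  then show ?case using realizes_Id_on bij_id by blast
next
  case (comp s t)
  then show ?case using realizes_relcomp bij_comp by blast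
next
  case (inv s)
  then show ?case using realizes_converse bij_imp_bij_inv by blast
qed

definition IH_perm :: "('v list set \<times> 'v list set) set \<Rightarrow> 'v point \<Rightarrow> 'v point" where
  "IH_perm s = (THE h. realizes s h)"

lemma IH_perm_eqI: "s \<noteq> {} \<Longrightarrow> realizes s h \<Longrightarrow> IH_perm s = h"
  unfolding IH_perm_def by (blast intro: the_equality realizes_unique)

lemma IH_perm:
  assumes "s \<in> IH V E" and "s \<noteq> {}"
  shows "bij (IH_perm s)" and "realizes s (IH_perm s)"
  using IH_realizable[OF assms(1)] IH_perm_eqI[OF assms(2)] by auto

lemma IH_perm_relcomp:
  assumes "s \<in> IH V E" and "t \<in> IH V E" and "s O t \<noteq> {}"
  shows "IH_perm (s O t) = IH_perm s \<circ> IH_perm t"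
proof -
  have "s \<noteq> {}" and "t \<noteq> {}" using assms(3) by auto
  then have "realizes (s O t) (IH_perm s \<circ> IH_perm t)"
    using assms(1,2) by (simp add: IH_perm(2) realizes_relcomp)
  then show ?thesis by (rule IH_perm_eqI[OF assms(3)])
qed

lemma IH_perm_eq_id_iff:
  assumes "s \<in> IH V E" and "s \<noteq> {}"
  shows "IH_perm s = id \<longleftrightarrow> s O s = s"
proof
  assume "IH_perm s = id"
  then have "elem_perm X = elem_perm Y" if "(X, Y) \<in> s" for X Y
    using IH_perm(2)[OF assms] that by (auto simp: realizes_def)
  then have "s \<subseteq> Id"
    using IH_subset_graph_monoid[OF assms(1)] elem_perm_inj by blast
  then show "s O s = s" by auto
next
  assume idem: "s O s = s"
  let ?h = "IH_perm s"
  have "realizes s (?h \<circ> ?h)"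
    using realizes_relcomp[OF IH_perm(2)[OF assms] IH_perm(2)[OF assms]] idem by simp
  then have "?h \<circ> ?h = ?h"
    using IH_perm(2)[OF assms] by (rule realizes_unique[OF assms(2)])
  then have "?h \<circ> ?h = ?h \<circ> id" by simp
  then show "?h = id"
    by (rule inj_comp_left_cancel[OF bij_is_inj[OF IH_perm(1)[OF assms]]])
qed

end

lemma strong_E_unitary_witnessI:
  assumes "group G"
    and zero: "\<And>a. a \<in> S \<Longrightarrow> prd z a = z \<and> prd a z = z"
    and carrier: "\<And>a. a \<in> S \<Longrightarrow> a \<noteq> z \<Longrightarrow> \<phi> a \<in> carrier G"
    and one: "\<And>a. a \<in> S \<Longrightarrow> a \<noteq> z \<Longrightarrow> \<phi> a = \<one>\<^bsub>G\<^esub> \<longleftrightarrow> prd a a = a"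
    and mult: "\<And>a b. a \<in> S \<Longrightarrow> b \<in> S \<Longrightarrow> prd a b \<noteq> z \<Longrightarrow> \<phi> (prd a b) = \<phi> a \<otimes>\<^bsub>G\<^esub> \<phi> b"
  shows "strong_E_unitary_witness S prd z G (\<lambda>a. if a = z then None else Some (\<phi> a))"
  unfolding strong_E_unitary_witness_def
proof (intro conjI ballI allI impI)
  fix a b assume "a \<in> S" "b \<in> S" "prd a b \<noteq> z"
  moreover from this have "a \<noteq> z" "b \<noteq> z" using zero by metis+
  ultimately show "(if prd a b = z then None else Some (\<phi> (prd a b))) =
      Some (the (if a = z then None else Some (\<phi> a)) \<otimes>\<^bsub>G\<^esub> the (if b = z then None else Some (\<phi> b)))"
    using mult by simp
qed (use assms in \<open>auto split: if_splits\<close>)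

definition image_group :: "('a, 'm) monoid_scheme \<Rightarrow> ('a \<Rightarrow> 'b) \<Rightarrow> 'b monoid" where
  "image_group H f = \<lparr>carrier = f ` carrier H,
     mult = (\<lambda>x y. f (inv_into (carrier H) f x \<otimes>\<^bsub>H\<^esub> inv_into (carrier H) f y)),
     one = f \<one>\<^bsub>H\<^esub>\<rparr>"

lemma image_group_carrier [simp]: "carrier (image_group H f) = f ` carrier H"
  and image_group_one [simp]: "\<one>\<^bsub>image_group H f\<^esub> = f \<one>\<^bsub>H\<^esub>"
  by (simp_all add: image_group_def)

lemma image_group_mult:
  assumes "inj_on f (carrier H)" and "x \<in> carrier H" and "y \<in> carrier H"
  shows "f x \<otimes>\<^bsub>image_group H f\<^esub> f y = f (x \<otimes>\<^bsub>H\<^esub> y)"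
  using assms by (simp add: image_group_def inv_into_f_f)

lemma group_image_group:
  assumes "group H" and inj: "inj_on f (carrier H)"
  shows "group (image_group H f)"
proof -
  interpret H: group H by (rule assms(1))
  note mult = image_group_mult[OF inj]
  show ?thesis
  proof (rule groupI, simp_all only: image_group_carrier image_group_one)
    show "x \<otimes>\<^bsub>image_group H f\<^esub> y \<in> f ` carrier H"
      if "x \<in> f ` carrier H" "y \<in> f ` carrier H" for x y
      using that by (auto simp: mult)
    show "f \<one>\<^bsub>H\<^esub> \<in> f ` carrier H" by simp
    show "x \<otimes>\<^bsub>image_group H f\<^esub> y \<otimes>\<^bsub>image_group H f\<^esub> z =
        x \<otimes>\<^bsub>image_group H f\<^esub> (y \<otimes>\<^bsub>image_group H f\<^esub> z)"
      if "x \<in> f ` carrier H" "y \<in> f ` carrier H" "z \<in> f ` carrier H" for x y z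
      using that by (auto simp: mult H.m_assoc)
    show "f \<one>\<^bsub>H\<^esub> \<otimes>\<^bsub>image_group H f\<^esub> x = x" if "x \<in> f ` carrier H" for x
      using that by (auto simp: mult)
    show "\<exists>y\<in>f ` carrier H. y \<otimes>\<^bsub>image_group H f\<^esub> x = f \<one>\<^bsub>H\<^esub>"
      if "x \<in> f ` carrier H" for x
      using that by (auto simp: mult) (metis H.inv_closed H.l_inv)
  qed
qed

lemma carrier_BijGroup_UNIV: "carrier (BijGroup UNIV) = {f. bij f}"
  by (auto simp: BijGroup_def Bij_def)

lemma BijGroup_UNIV_mult: "bij f \<Longrightarrow> bij g \<Longrightarrow> f \<otimes>\<^bsub>BijGroup UNIV\<^esub> g = f \<circ> g"
  by (simp add: BijGroup_def Bij_def compose_def comp_def restrict_UNIV)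

lemma BijGroup_UNIV_one: "\<one>\<^bsub>BijGroup UNIV\<^esub> = id"
  by (simp add: BijGroup_def id_def restrict_UNIV)

text \<open>The group in the definition of strongly E*-unitary must live on lists of elements of
  P(\<Gamma>); permutations of points are coded there injectively via their graphs.\<close>
definition point_code :: "'v point \<Rightarrow> 'v list set" where
  "point_code = (\<lambda>((a, b), x). {[a, b], replicate (to_nat x + 3) a})"

lemma inj_point_code: "inj point_code"
proof (rule injI)
  fix z z' :: "'v point"
  assume eq: "point_code z = point_code z'"
  obtain a b x a' b' x' where z: "z = ((a, b), x)" and z': "z' = ((a', b'), x')"
    by (metis prod.exhaust)
  have "[a, b] \<noteq> replicate (to_nat x' + 3) a'" and "[a', b'] \<noteq> replicate (to_nat x + 3) a"
    by (simp_all add: numeral_3_eq_3)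
  then show "z = z'"
    using eq unfolding z z' point_code_def by (auto simp: doubleton_eq_iff)
qed

definition perm_code :: "('v point \<Rightarrow> 'v point) \<Rightarrow> ('v list set \<times> 'v list set) set list" where
  "perm_code f = [(\<lambda>z. (point_code z, point_code (f z))) ` UNIV]"

lemma inj_perm_code: "inj perm_code"
proof (rule injI)
  fix f g :: "'v point \<Rightarrow> 'v point"
  assume "perm_code f = perm_code g"
  then have graph: "range (\<lambda>z. (point_code z, point_code (f z))) = range (\<lambda>z. (point_code z, point_code (g z)))"
    unfolding perm_code_def by simp
  show "f = g"
  proof
    fix z
    obtain z' where "point_code z = point_code z'" and "point_code (f z) = point_code (g z')"
      using graph by (metis (no_types, lifting) Pair_inject rangeE rangeI)
    then show "f z = g z" using injD[OF inj_point_code] by metis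
  qed
qed

lemma inj_on_perm_code: "inj_on perm_code A"
  using inj_perm_code subset_UNIV by (rule inj_on_subset)

definition perm_code_group :: "('v list set \<times> 'v list set) set list monoid" where
  "perm_code_group = image_group (BijGroup (UNIV :: 'v point set)) perm_code"

lemma group_perm_code_group: "group perm_code_group"
  unfolding perm_code_group_def
  using group_BijGroup inj_on_perm_code by (rule group_image_group)

lemma perm_code_group_carrier: "bij f \<Longrightarrow> perm_code f \<in> carrier perm_code_group"
  by (simp add: perm_code_group_def carrier_BijGroup_UNIV)

lemma perm_code_group_one: "\<one>\<^bsub>perm_code_group\<^esub> = perm_code id"
  by (simp add: perm_code_group_def BijGroup_UNIV_one)

lemma perm_code_group_mult:
  assumes "bij f" and "bij g"
  shows "perm_code f \<otimes>\<^bsub>perm_code_group\<^esub> perm_code g = perm_code (f \<circ> g)"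
  using assms
  by (simp add: perm_code_group_def image_group_mult inj_on_perm_code carrier_BijGroup_UNIV
      BijGroup_UNIV_mult)

theorem corollary3p4:
  fixes V :: "'v set" and E :: "'v \<Rightarrow> 'v \<Rightarrow> bool"
  assumes "is_graph V E"
  shows "strongly_E_star_unitary (polygraph_monoid V E) (\<lambda>s t. s O t) {}"
proof -
  interpret independence E
    using assms by unfold_locales (auto simp: is_graph_def)
  have IH: "s \<in> IH V E" if "s \<in> polygraph_monoid V E" and "s \<noteq> {}" for s
    using that by (simp add: polygraph_monoid_def)
  have "strong_E_unitary_witness (polygraph_monoid V E) (\<lambda>s t. s O t) {} perm_code_group
      (\<lambda>s. if s = {} then None else Some (perm_code (IH_perm s)))"
  proof (rule strong_E_unitary_witnessI)
    show "perm_code (IH_perm s) \<in> carrier perm_code_group"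
      if "s \<in> polygraph_monoid V E" "s \<noteq> {}" for s
      using IH_perm(1)[OF IH[OF that] that(2)] by (rule perm_code_group_carrier)
    show "perm_code (IH_perm s) = \<one>\<^bsub>perm_code_group\<^esub> \<longleftrightarrow> s O s = s"
      if "s \<in> polygraph_monoid V E" "s \<noteq> {}" for s
      using IH_perm_eq_id_iff[OF IH[OF that] that(2)]
      by (simp add: perm_code_group_one inj_eq[OF inj_perm_code])
    show "perm_code (IH_perm (s O t)) =
        perm_code (IH_perm s) \<otimes>\<^bsub>perm_code_group\<^esub> perm_code (IH_perm t)"
      if "s \<in> polygraph_monoid V E" "t \<in> polygraph_monoid V E" "s O t \<noteq> {}" for s t
    proof -
      have "s \<noteq> {}" and "t \<noteq> {}" using that(3) by auto
      with that(1,2) have "s \<in> IH V E" and "t \<in> IH V E" by (simp_all add: IH)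
      with \<open>s \<noteq> {}\<close> \<open>t \<noteq> {}\<close> that(3) show ?thesis
        by (simp add: IH_perm_relcomp IH_perm(1) perm_code_group_mult)
    qed
  qed (simp_all add: group_perm_code_group)
  then show ?thesis
    unfolding strongly_E_star_unitary_def by blast
qed

end
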